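(* Let $N$ and $M$ be large positive parameters, let $\mathcal{X}$ be any subset of $\{1,2,\ldots,10^M\}$, and let $\Delta=\Delta(N)$ be any function with $\Delta\to\infty$. If $M|\mathcal{X}|\Delta^2\le \pi(N)\log M$, then for $\pi(N)\bigl(1+O(1/\Delta)\bigr)$ primes $p\le N$ we have $$\#\{x \bmod p \;:\; x\in\mathcal{X}\}=|\mathcal{X}|\bigl(1+O(\Delta^{-1})\bigr).$$
   Context: $\pi(N)$ denotes the number of primes $p\le N$. $\#\{x \bmod p : x\in\mathcal{X}\}$ is the number of distinct residues modulo $p$ of elements of $\mathcal{X}$. *)

theory Defs
  imports Complex_Main "HOL-Computational_Algebra.Primes"
begin

definition prime_pi :: "nat \<Rightarrow> nat" where
  "prime_pi N = card {p. prime p \<and> p \<le> N}"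

definition num_residues :: "nat set \<Rightarrow> nat \<Rightarrow> nat" where
  "num_residues X p = card ((\<lambda>x. x mod p) ` X)"

end

theory Submission imports Defs "HOL-Real_Asymp.Real_Asymp" begin

text \<open>
  Call x \<in> X colliding at p if some other y \<in> X has y \<equiv> x (mod p). The number of residues of X
  modulo p is at least |X| minus the number of elements colliding at p. A fixed x collides only at
  primes dividing \<Prod>y\<noteq>x |x - y| \<le> 10^(M|X|); about \<surd>M of these are below \<surd>M and at most
  2 M |X| log 10 / log M are above, so x collides at O(M |X| / log M) primes. Double counting the
  pairs (p, x), the primes p \<le> N at which more than C|X|/\<Delta> elements collide number
  O(M |X| \<Delta> / log M), which is at most \<pi>(N)/\<Delta> by hypothesis.
\<close>

lemma prod_prime_factors_dvd: "(n::nat) > 0 \<Longrightarrow> \<Prod>(prime_factors n) dvd n"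
proof -
  assume n: "n > 0"
  have "\<Prod>(prime_factors n) dvd (\<Prod>p \<in> prime_factors n. p ^ multiplicity p n)"
    using n by (intro prod_dvd_prod) (simp add: prime_factors_multiplicity dvd_power)
  also have "\<dots> = n" using prime_factorization_nat[OF n] by simp
  finally show ?thesis .
qed

lemma card_prime_factors_le:
  fixes n T :: nat
  assumes n: "n > 0" and T: "2 \<le> T"
  shows "real (card (prime_factors n)) \<le> real T + ln (real n) / ln (real T)"
proof -
  define small where "small = {p \<in> prime_factors n. p < T}"
  define large where "large = {p \<in> prime_factors n. T \<le> p}"
  have split: "card (prime_factors n) = card small + card large"
    unfolding small_def large_def by (subst card_Un_disjoint[symmetric]) (auto intro: arg_cong[where f = card])
  have "card small \<le> T"
    using card_mono[of "{..<T}" small] by (auto simp: small_def)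
  have "T ^ card large = (\<Prod>p\<in>large. T)" by simp
  also have "\<dots> \<le> \<Prod>large" by (intro prod_mono) (auto simp: large_def)
  also have "\<dots> \<le> n"
  proof (rule dvd_imp_le)
    have "\<Prod>large dvd \<Prod>(prime_factors n)" by (intro prod_dvd_prod_subset) (auto simp: large_def)
    then show "\<Prod>large dvd n" using prod_prime_factors_dvd[OF n] by (rule dvd_trans)
  qed (use n in simp)
  finally have "real T ^ card large \<le> real n" by (metis of_nat_le_iff of_nat_power)
  then have "real (card large) * ln (real T) \<le> ln (real n)"
    using T by (metis ln_le_cancel_iff ln_realpow of_nat_0_less_iff order_less_le_trans pos2 zero_less_power)
  then have "real (card large) \<le> ln (real n) / ln (real T)"
    using T by (simp add: field_simps)
  with split \<open>card small \<le> T\<close> show ?thesis by simp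
qed

definition collides :: "nat set \<Rightarrow> nat \<Rightarrow> nat \<Rightarrow> bool" where
  "collides X p x \<longleftrightarrow> (\<exists>y\<in>X. y \<noteq> x \<and> x mod p = y mod p)"

definition colliding_primes :: "nat set \<Rightarrow> nat \<Rightarrow> nat set" where
  "colliding_primes X x = {p. prime p \<and> collides X p x}"

lemma colliding_primes_subset_prime_factors:
  assumes "finite X"
  shows "colliding_primes X x \<subseteq> prime_factors (\<Prod>y\<in>X - {x}. nat \<bar>int x - int y\<bar>)"
    (is "_ \<subseteq> prime_factors ?P")
proof
  fix p assume "p \<in> colliding_primes X x"
  then obtain y where "prime p" "y \<in> X - {x}" "p dvd nat \<bar>int x - int y\<bar>"
    by (auto simp: colliding_primes_def collides_def mod_eq_iff_dvd_symdiff_nat)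
  moreover have "nat \<bar>int x - int y\<bar> dvd ?P"
    using assms \<open>y \<in> X - {x}\<close> by (intro dvd_prodI) auto
  ultimately have "prime p" "p dvd ?P" by (blast intro: dvd_trans)+
  moreover have "?P \<noteq> 0" using assms by auto
  ultimately show "p \<in> prime_factors ?P" by (simp add: in_prime_factors_iff)
qed

lemma finite_colliding_primes: "finite X \<Longrightarrow> finite (colliding_primes X x)"
  by (rule finite_subset[OF colliding_primes_subset_prime_factors]) auto

lemma card_colliding_primes_le:
  fixes B T :: nat
  assumes X: "X \<subseteq> {1..B}" and x: "x \<in> X" and T: "2 \<le> T"
  shows "real (card (colliding_primes X x))
           \<le> real T + real (card X) * ln (real B) / ln (real T)"
proof -
  have "finite X" using X finite_subset by blast
  define P where "P = (\<Prod>y\<in>X - {x}. nat \<bar>int x - int y\<bar>)"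
  have factor_le: "nat \<bar>int x - int y\<bar> \<le> B" if "y \<in> X" for y
  proof -
    have "x \<in> {1..B}" "y \<in> {1..B}" using that x X by auto
    then show ?thesis by auto
  qed
  have "P > 0" unfolding P_def using \<open>finite X\<close> by (intro prod_pos) auto
  have "P \<le> (\<Prod>y\<in>X - {x}. B)"
    unfolding P_def using factor_le by (intro prod_mono) auto
  also have "\<dots> = B ^ card (X - {x})" by simp
  also have "\<dots> \<le> B ^ card X"
    using x X \<open>finite X\<close> by (intro power_increasing) (auto simp: card_Diff1_le)
  finally have "real P \<le> real B ^ card X" by (metis of_nat_le_iff of_nat_power)
  then have ln_P: "ln (real P) \<le> real (card X) * ln (real B)"
    using \<open>P > 0\<close> by (metis ln_le_cancel_iff ln_realpow of_nat_0_less_iff order_less_le_trans)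
  have "card (colliding_primes X x) \<le> card (prime_factors P)"
    unfolding P_def using \<open>finite X\<close> by (intro card_mono colliding_primes_subset_prime_factors) auto
  also have "real (card (prime_factors P)) \<le> real T + ln (real P) / ln (real T)"
    using \<open>P > 0\<close> T by (rule card_prime_factors_le)
  also have "\<dots> \<le> real T + real (card X) * ln (real B) / ln (real T)"
    using ln_P T by (intro add_left_mono divide_right_mono) auto
  finally show ?thesis by simp
qed

lemma card_colliding_primes_le_log:
  fixes M :: nat
  assumes X: "X \<subseteq> {1..10^M}" and x: "x \<in> X"
    and M: "3 \<le> M" "sqrt (real M) + 1 \<le> real M / ln (real M)"
  shows "real (card (colliding_primes X x)) \<le> 19 * real M * real (card X) / ln (real M)"
proof -
  \<comment> \<open>With T = \<lceil>\<surd>M\<rceil>, and 19 = 1 + 2 \<cdot> 9 from the crude bound ln 10 \<le> 9.\<close>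
  define T where "T = nat \<lceil>sqrt (real M)\<rceil>"
  have "1 < sqrt (real M)" using M by simp
  then have T: "sqrt (real M) \<le> real T" "real T \<le> sqrt (real M) + 1" "2 \<le> T"
    unfolding T_def by linarith+
  have ln_M: "0 < ln (real M)" using M by simp
  have "ln (real M) / 2 = ln (sqrt (real M))" using M by (simp add: ln_sqrt)
  also have "\<dots> \<le> ln (real T)" using T \<open>1 < sqrt (real M)\<close> by (intro ln_mono) auto
  finally have ln_T: "ln (real M) / 2 \<le> ln (real T)" .
  have "ln (10::real) \<le> 9" using ln_le_minus_one[of 10] by simp
  then have ln_B: "ln (real (10 ^ M)) \<le> real M * 9" by (simp add: ln_realpow mult_left_mono)
  have "finite X" using X by (rule finite_subset) simp
  then have "card X \<ge> 1" using x by (auto simp: Suc_le_eq card_gt_0_iff)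
  have "real (card (colliding_primes X x))
          \<le> real T + real (card X) * ln (real (10 ^ M)) / ln (real T)"
    using X x T(3) by (rule card_colliding_primes_le)
  also have "real (card X) * ln (real (10 ^ M)) / ln (real T)
               \<le> real (card X) * (real M * 9) / (ln (real M) / 2)"
    using ln_M ln_T ln_B by (intro frac_le mult_left_mono) auto
  also have "real T \<le> real M * real (card X) / ln (real M)"
  proof -
    have "real T \<le> real M / ln (real M)" using T M by linarith
    also have "\<dots> \<le> real M * real (card X) / ln (real M)"
      using \<open>card X \<ge> 1\<close> ln_M by (intro divide_right_mono) (auto simp: mult_le_cancel_left1)
    finally show ?thesis .
  qed
  finally show ?thesis by (simp add: field_simps)
qed

lemma card_le_num_residues_add_collisions:
  assumes "finite X"
  shows "card X \<le> num_residues X p + card {x\<in>X. collides X p x}"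
proof -
  define C where "C = {x\<in>X. collides X p x}"
  have "inj_on (\<lambda>x. x mod p) (X - C)"
    by (auto intro!: inj_onI simp: C_def collides_def)
  then have "card (X - C) \<le> num_residues X p"
    unfolding num_residues_def using assms by (metis card_image card_mono Diff_subset finite_imageI image_mono)
  moreover have "card X \<le> card (X - C) + card C"
    using card_Un_le[of "X - C" C] by (simp add: C_def Un_absorb2)
  ultimately show ?thesis by (simp add: C_def)
qed

lemma double_counting_card_le:
  fixes R :: "'a \<Rightarrow> 'b \<Rightarrow> bool" and K c :: real
  assumes P: "finite P" and X: "finite X"
    and K: "\<And>x. x \<in> X \<Longrightarrow> real (card {p\<in>P. R p x}) \<le> K"
  shows "real (card {p\<in>P. c < real (card {x\<in>X. R p x})}) * c \<le> real (card X) * K"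
proof -
  define H where "H = {p\<in>P. c < real (card {x\<in>X. R p x})}"
  have "real (card H) * c \<le> (\<Sum>p\<in>H. real (card {x\<in>X. R p x}))"
    using sum_mono[of H "\<lambda>_. c"] by (simp add: H_def less_imp_le)
  also have "\<dots> \<le> (\<Sum>p\<in>P. real (card {x\<in>X. R p x}))"
    using P by (intro sum_mono2) (auto simp: H_def)
  also have "\<dots> = (\<Sum>x\<in>X. real (card {p\<in>P. R p x}))"
  proof -
    have count: "real (card {a\<in>A. Q a}) = (\<Sum>a\<in>A. if Q a then 1 else 0)" if "finite A" for A Q
      using that by (simp flip: sum.inter_filter)
    show ?thesis using P X by (simp add: count sum.swap[of _ P])
  qed
  also have "\<dots> \<le> real (card X) * K"
    using K sum_bounded_above[of X "\<lambda>x. real (card {p\<in>P. R p x})" K] by simp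
  finally show ?thesis by (simp add: H_def)
qed

lemma card_primes_heavy_collisions_le:
  fixes N M :: nat and D :: real
  assumes X: "X \<subseteq> {1..10^M}" and M: "3 \<le> M" "sqrt (real M) + 1 \<le> real M / ln (real M)"
    and D: "1 \<le> D"
    and hyp: "real M * real (card X) * D^2 \<le> real (prime_pi N) * ln (real M)"
  shows "real (card {p. prime p \<and> p \<le> N \<and> 19 * real (card X) / D < real (card {x\<in>X. collides X p x})})
           \<le> real (prime_pi N) / D"
    (is "real (card ?heavy) \<le> _")
proof (cases "X = {}")
  case True
  then show ?thesis using D by simp
next
  case False
  have "finite X" using X by (rule finite_subset) simp
  with False have n: "0 < real (card X)" by (simp add: card_gt_0_iff)
  have ln_M: "0 < ln (real M)" using M by simp
  have heavy_eq: "?heavy = {p \<in> {p. prime p \<and> p \<le> N}. 19 * real (card X) / D < real (card {x\<in>X. collides X p x})}"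
    by auto
  have per_element: "real (card {p \<in> {p. prime p \<and> p \<le> N}. collides X p x})
                   \<le> 19 * real M * real (card X) / ln (real M)" if "x \<in> X" for x
  proof -
    have "card {p \<in> {p. prime p \<and> p \<le> N}. collides X p x} \<le> card (colliding_primes X x)"
      using \<open>finite X\<close> by (intro card_mono finite_colliding_primes) (auto simp: colliding_primes_def)
    also have "real (card (colliding_primes X x)) \<le> 19 * real M * real (card X) / ln (real M)"
      using X that M by (rule card_colliding_primes_le_log)
    finally show ?thesis by simp
  qed
  have "real (card ?heavy) * (19 * real (card X) / D)
          \<le> real (card X) * (19 * real M * real (card X) / ln (real M))"
    unfolding heavy_eq using \<open>finite X\<close> per_element n D by (intro double_counting_card_le) auto
  then have "real (card ?heavy) \<le> real M * real (card X) * D / ln (real M)"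
    using n D ln_M by (simp add: field_simps)
  also have "\<dots> \<le> real (prime_pi N) / D"
    using hyp D ln_M by (simp add: field_simps power2_eq_square)
  finally show ?thesis .
qed

lemma card_primes_residues_close:
  fixes N M :: nat and D :: real
  assumes X: "X \<subseteq> {1..10^M}" and M: "3 \<le> M" "sqrt (real M) + 1 \<le> real M / ln (real M)"
    and D: "1 \<le> D"
    and hyp: "real M * real (card X) * D^2 \<le> real (prime_pi N) * ln (real M)"
  shows "real (prime_pi N) * (1 - 19 / D)
           \<le> real (card {p. prime p \<and> p \<le> N \<and>
                 \<bar>real (num_residues X p) - real (card X)\<bar> \<le> 19 * real (card X) / D})"
    (is "_ \<le> real (card ?good)")
proof -
  define heavy where "heavy = {p. prime p \<and> p \<le> N \<and>
    19 * real (card X) / D < real (card {x\<in>X. collides X p x})}"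
  have "finite X" using X by (rule finite_subset) simp
  have "{p. prime p \<and> p \<le> N} \<subseteq> ?good \<union> heavy"
  proof
    fix p assume p: "p \<in> {p. prime p \<and> p \<le> N}"
    have "num_residues X p \<le> card X"
      unfolding num_residues_def using \<open>finite X\<close> by (rule card_image_le)
    moreover have "card X \<le> num_residues X p + card {x\<in>X. collides X p x}"
      using \<open>finite X\<close> by (rule card_le_num_residues_add_collisions)
    ultimately have "\<bar>real (num_residues X p) - real (card X)\<bar> \<le> real (card {x\<in>X. collides X p x})"
      by linarith
    then show "p \<in> ?good \<union> heavy" using p by (auto simp: heavy_def)
  qed
  moreover have "finite (?good \<union> heavy)"
    by (rule finite_subset[of _ "{..N}"]) (auto simp: heavy_def)
  ultimately have "prime_pi N \<le> card (?good \<union> heavy)"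
    unfolding prime_pi_def by (simp add: card_mono)
  then have "prime_pi N \<le> card ?good + card heavy"
    using card_Un_le order_trans by blast
  moreover have "real (card heavy) \<le> real (prime_pi N) / D"
    unfolding heavy_def using X M D hyp by (rule card_primes_heavy_collisions_le)
  moreover have "real (prime_pi N) / D \<le> 19 * real (prime_pi N) / D"
    using D by (simp add: divide_right_mono)
  ultimately show ?thesis by (simp add: right_diff_distrib)
qed

theorem corollary1:
  fixes \<Delta> :: "nat \<Rightarrow> real"
  assumes "filterlim \<Delta> at_top at_top"
  shows "\<exists>C>0. \<exists>N0 M0. \<forall>N\<ge>N0. \<forall>M\<ge>M0. \<forall>X::nat set.
           X \<subseteq> {1..10^M} \<longrightarrow>
           real M * real (card X) * (\<Delta> N)^2 \<le> real (prime_pi N) * ln (real M) \<longrightarrow>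
           real (card {p. prime p \<and> p \<le> N \<and>
                   \<bar>real (num_residues X p) - real (card X)\<bar> \<le> C * real (card X) / \<Delta> N})
             \<ge> real (prime_pi N) * (1 - C / \<Delta> N)"
proof -
  have "eventually (\<lambda>N. 1 \<le> \<Delta> N) at_top"
    using assms by (simp add: filterlim_at_top)
  then obtain N0 where N0: "\<And>N. N \<ge> N0 \<Longrightarrow> 1 \<le> \<Delta> N"
    by (auto simp: eventually_at_top_linorder)
  have "eventually (\<lambda>M::nat. 3 \<le> M \<and> sqrt (real M) + 1 \<le> real M / ln (real M)) at_top"
    by (intro eventually_conj eventually_ge_at_top) real_asymp
  then obtain M0 where M0: "\<And>M. M \<ge> M0 \<Longrightarrow> 3 \<le> M \<and> sqrt (real M) + 1 \<le> real M / ln (real M)"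
    by (auto simp: eventually_at_top_linorder)
  have "real (prime_pi N) * (1 - 19 / \<Delta> N)
          \<le> real (card {p. prime p \<and> p \<le> N \<and>
                 \<bar>real (num_residues X p) - real (card X)\<bar> \<le> 19 * real (card X) / \<Delta> N})"
    if "N \<ge> N0" "M \<ge> M0" "X \<subseteq> {1..10^M}"
      "real M * real (card X) * (\<Delta> N)^2 \<le> real (prime_pi N) * ln (real M)" for N M X
    using that(3) M0[OF that(2)] N0[OF that(1)] that(4)
    by (intro card_primes_residues_close) auto
  then show ?thesis by (intro exI[of _ "19::real"] conjI exI[of _ N0] exI[of _ M0]) auto
qed

end
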